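(* Assume $\mathrm{recc}(C)\subseteq\mathrm{recc}(P^B)$. Let $D\subseteq N_1\cup N_2$ and $S\subseteq M_D$. Then every $x\in P^B\setminus G_D^C$ satisfies $$\sum_{j\in S}\frac{x_j}{\alpha_j}-\sum_{j\in N\setminus D}\frac{x_j}{\varepsilon_j(S)}\le 1.$$
   Context: Let $A\in\mathbb{R}^{m\times n}$ have full row rank, $b\in\mathbb{R}^m$, and $P=\{x\in\mathbb{R}^n_+:Ax=b\}$. Let $C\subseteq\mathbb{R}^n$ be an open convex set. Fix a basis $B$ of $P$ with nonbasic set $N=\{1,\dots,n\}\setminus B$. Write $P=\{x:x_i=\bar b_i-\sum_{j\in N}\bar a_{ij}x_j\ (i\in B),\ x_j\ge0\ (j=1,\dots,n)\}$ with $\bar b\ge0$. The basic solution $\bar x$ has $\bar x_i=\bar b_i$ ($i\in B$) and $0$ ($i\in N$). $P^B$ is obtained by dropping $x_i\ge0$ for $i\in B$. For $j\in N$, $\bar r^j$ has $\bar r^j_k=-\bar a_{kj}$ ($k\in B$), $\bar r^j_j=1$, and $0$ otherwise. Thus $P^B=\{\bar x+\sum_{j\in N}x_j\bar r^j:x_j\ge0\}$, and for $x\in P^B$ the $x_j$ ($j\in N$) are the coefficients in this representation. It is assumed that $\bar x\notin\mathrm{cl}(C)$. For $j\in N$, $\alpha_j=\inf\{\lambda\ge0:\bar x+\lambda\bar r^j\in C\}$ and $\beta_j=\sup\{\lambda\ge0:\bar x+\lambda\bar r^j\in C\}$, with $\alpha_j=+\infty$, $\beta_j=-\infty$ if that halfline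 misses $C$. Define - $N_1=\{j:\alpha_j\in(0,\infty),\beta_j=+\infty\}$; - $N_2=\{j:\alpha_j\in(0,\infty),\beta_j\in(\alpha_j,\infty)\}$. For a set $K$, $\mathrm{recc}(K)=\{d:x+\lambda d\in K\ \forall x\in K,\lambda\ge0\}$. We use the convention $t/+\infty=0$. For $D\subseteq N_1\cup N_2$, define $G_D=\{\bar x\}+\mathrm{conv}\big(\bigcup_{j\in D}\{\lambda\bar r^j:\lambda>\alpha_j\}\big)$ and $G_D^C=G_D+\mathrm{recc}(C)$. For $(i,j)\in D\times(N\setminus D)$ let $\gamma_{ij}=\sup\{\gamma\ge0:\alpha_i\bar r^i+\gamma\bar r^j\in\mathrm{recc}(G_D^C)\}$. Let $M_D=\{i\in D:\gamma_{ij}>0\ \forall j\in N\setminus D\}$. For $S\subseteq M_D$ and $j\in N\setminus D$, let $\varepsilon_j(S)=\min_{i\in S}\gamma_{ij}$ if $S\neq\emptyset$, and $\varepsilon_j(\emptyset)=+\infty$. *)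

theory Defs
  imports "HOL-Analysis.Analysis" "HOL-Library.Extended_Real"
begin

text \<open>Data: A :: real^'n^'m (m x n matrix), b :: real^'m, B a set of column indices
 (nonbasic set N = UNIV - B).\<close>

definition recc :: "('a::real_vector) set \<Rightarrow> 'a set" where
  "recc K = {d. \<forall>x\<in>K. \<forall>t::real. t \<ge> 0 \<longrightarrow> x + t *\<^sub>R d \<in> K}"

definition is_basis :: "real^'n^'m \<Rightarrow> 'n set \<Rightarrow> bool" where
  "is_basis A B \<longleftrightarrow> card B = CARD('m) \<and> inj_on (\<lambda>k. column k A) B
      \<and> independent ((\<lambda>k. column k A) ` B)"

definition basic_sol :: "real^'n^'m \<Rightarrow> real^'m \<Rightarrow> 'n set \<Rightarrow> real^'n" where
  "basic_sol A b B = (THE x. A *v x = b \<and> (\<forall>k. k \<notin> B \<longrightarrow> x $ k = 0))"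

text \<open>the ray r^j: components -abar_kj on B, 1 at j, 0 elsewhere, i.e. A r = 0\<close>
definition ray :: "real^'n^'m \<Rightarrow> 'n set \<Rightarrow> 'n \<Rightarrow> real^'n" where
  "ray A B j = (THE r. A *v r = 0 \<and> r $ j = 1 \<and> (\<forall>k. k \<notin> B \<and> k \<noteq> j \<longrightarrow> r $ k = 0))"

text \<open>P^B: drop the nonnegativity of basic variables\<close>
definition PB :: "real^'n^'m \<Rightarrow> real^'m \<Rightarrow> 'n set \<Rightarrow> (real^'n) set" where
  "PB A b B = {x. A *v x = b \<and> (\<forall>k. k \<notin> B \<longrightarrow> 0 \<le> x $ k)}"

definition alpha :: "real^'n^'m \<Rightarrow> real^'m \<Rightarrow> 'n set \<Rightarrow> (real^'n) set \<Rightarrow> 'n \<Rightarrow> ereal" where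
  "alpha A b B C j = Inf (ereal ` {t. 0 \<le> t \<and> basic_sol A b B + t *\<^sub>R ray A B j \<in> C})"

definition beta :: "real^'n^'m \<Rightarrow> real^'m \<Rightarrow> 'n set \<Rightarrow> (real^'n) set \<Rightarrow> 'n \<Rightarrow> ereal" where
  "beta A b B C j = Sup (ereal ` {t. 0 \<le> t \<and> basic_sol A b B + t *\<^sub>R ray A B j \<in> C})"

definition N1 :: "real^'n^'m \<Rightarrow> real^'m \<Rightarrow> 'n set \<Rightarrow> (real^'n) set \<Rightarrow> 'n set" where
  "N1 A b B C = {j. j \<notin> B \<and> 0 < alpha A b B C j \<and> alpha A b B C j < \<infinity>
                    \<and> beta A b B C j = \<infinity>}"

definition N2 :: "real^'n^'m \<Rightarrow> real^'m \<Rightarrow> 'n set \<Rightarrow> (real^'n) set \<Rightarrow> 'n set" where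
  "N2 A b B C = {j. j \<notin> B \<and> 0 < alpha A b B C j \<and> alpha A b B C j < \<infinity>
                    \<and> alpha A b B C j < beta A b B C j \<and> beta A b B C j < \<infinity>}"

definition G :: "real^'n^'m \<Rightarrow> real^'m \<Rightarrow> 'n set \<Rightarrow> (real^'n) set \<Rightarrow> 'n set \<Rightarrow> (real^'n) set" where
  "G A b B C D = (\<lambda>y. basic_sol A b B + y) `
      (convex hull (\<Union>j\<in>D. {t *\<^sub>R ray A B j | t. ereal t > alpha A b B C j}))"

definition GC :: "real^'n^'m \<Rightarrow> real^'m \<Rightarrow> 'n set \<Rightarrow> (real^'n) set \<Rightarrow> 'n set \<Rightarrow> (real^'n) set" where
  "GC A b B C D = {g + d | g d. g \<in> G A b B C D \<and> d \<in> recc C}"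

definition gamma :: "real^'n^'m \<Rightarrow> real^'m \<Rightarrow> 'n set \<Rightarrow> (real^'n) set \<Rightarrow> 'n set \<Rightarrow> 'n \<Rightarrow> 'n \<Rightarrow> ereal" where
  "gamma A b B C D i j = Sup (ereal ` {g. 0 \<le> g \<and>
      real_of_ereal (alpha A b B C i) *\<^sub>R ray A B i + g *\<^sub>R ray A B j \<in> recc (GC A b B C D)})"

definition M :: "real^'n^'m \<Rightarrow> real^'m \<Rightarrow> 'n set \<Rightarrow> (real^'n) set \<Rightarrow> 'n set \<Rightarrow> 'n set" where
  "M A b B C D = {i \<in> D. \<forall>j. j \<notin> B \<and> j \<notin> D \<longrightarrow> gamma A b B C D i j > 0}"

definition eps :: "real^'n^'m \<Rightarrow> real^'m \<Rightarrow> 'n set \<Rightarrow> (real^'n) set \<Rightarrow> 'n set \<Rightarrow> 'n set \<Rightarrow> 'n \<Rightarrow> ereal" where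
  "eps A b B C D S j = (if S = {} then \<infinity> else Min ((\<lambda>i. gamma A b B C D i j) ` S))"

text \<open>t / e for an extended real e, with the convention t / +infinity = 0\<close>
definition ediv :: "real \<Rightarrow> ereal \<Rightarrow> real" where
  "ediv t e = (if e = \<infinity> then 0 else t / real_of_ereal e)"

end

theory Submission
  imports Defs
begin

(* Suppose the inequality fails at x. Choose g_j slightly below \<epsilon>_j(S) for j \<in> N - D, so that with
   w_i = x_i / \<alpha>_i, \<sigma> = \<Sum>_S w_i and T = \<Sum>_{N-D} x_j / g_j still \<sigma> - T > 1. Since g_j < \<gamma>_ij, every
   \<alpha>_i r^i + g_j r^j (i \<in> S) is a recession direction of G_D^C, and so is every r^j with j \<in> D.
   Now x - xbar = \<Sum>_{j \<in> N} x_j r^j splits into \<Sum>_S (1 - T/\<sigma>) w_i \<alpha>_i r^i, which lies in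
   conv(\<Union>_D {\<lambda> r^j : \<lambda> > \<alpha>_j}) because its weights sum to \<sigma> - T > 1, plus the recession direction
   \<Sum>_S (w_i/\<sigma>) \<Sum>_{N-D} (x_j/g_j) (\<alpha>_i r^i + g_j r^j) + \<Sum>_{D-S} x_j r^j. Hence x \<in> G_D^C. *)

lemma is_basis_solvable:
  fixes A :: "real^'n^'m"
  assumes "is_basis A B"
  shows "\<exists>v. A *v v = y \<and> (\<forall>k. k \<notin> B \<longrightarrow> v $ k = 0)"
proof -
  let ?c = "\<lambda>k. column k A"
  have inj: "inj_on ?c B" and ind: "independent (?c ` B)" and cB: "card B = CARD('m)"
    using assms unfolding is_basis_def by auto
  have "card (?c ` B) = CARD('m)" using inj cB card_image by fastforce
  hence "(UNIV :: (real^'m) set) \<subseteq> span (?c ` B)"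
    using card_ge_dim_independent[of "?c ` B" UNIV] ind by simp
  hence "y \<in> range (\<lambda>u. \<Sum>w\<in>?c ` B. u w *\<^sub>R w)"
    using span_finite[of "?c ` B"] by auto
  then obtain u where u: "(\<Sum>w\<in>?c ` B. u w *\<^sub>R w) = y" by blast
  define v where "v = (\<chi> k. if k \<in> B then u (?c k) else 0)"
  have "A *v v = (\<Sum>k\<in>UNIV. (v$k) *s ?c k)" by (rule matrix_mult_sum)
  also have "\<dots> = (\<Sum>k\<in>B. u (?c k) *\<^sub>R ?c k)"
    by (rule sum.mono_neutral_cong_right) (auto simp: v_def scalar_mult_eq_scaleR)
  also have "\<dots> = y"
    using sum.reindex[OF inj, of "\<lambda>w. u w *\<^sub>R w"] u by simp
  finally show ?thesis by (intro exI[of _ v]) (auto simp: v_def)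
qed

lemma is_basis_kernel_trivial:
  fixes A :: "real^'n^'m"
  assumes "is_basis A B" "A *v v = 0" "\<forall>k. k \<notin> B \<longrightarrow> v $ k = 0"
  shows "v = 0"
proof -
  let ?c = "\<lambda>k. column k A"
  have inj: "inj_on ?c B" and ind: "independent (?c ` B)"
    using assms unfolding is_basis_def by auto
  have "0 = (\<Sum>k\<in>UNIV. (v$k) *s ?c k)" using assms(2) matrix_mult_sum by metis
  also have "\<dots> = (\<Sum>k\<in>B. v$k *\<^sub>R ?c k)"
    by (rule sum.mono_neutral_cong_right) (auto simp: assms(3) scalar_mult_eq_scaleR)
  also have "\<dots> = (\<Sum>w\<in>?c ` B. v $ (inv_into B ?c w) *\<^sub>R w)"
    using sum.reindex[OF inj, of "\<lambda>w. v $ (inv_into B ?c w) *\<^sub>R w"] inv_into_f_f[OF inj] by simp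
  finally have "\<forall>w\<in>?c ` B. v $ (inv_into B ?c w) = 0"
    using ind dependent_finite[of "?c ` B"] by auto
  hence "\<forall>k\<in>B. v$k = 0" using inv_into_f_f[OF inj] by fastforce
  thus ?thesis using assms(3) by (metis vec_eq_iff zero_index)
qed

lemma is_basis_unique_solution:
  fixes A :: "real^'n^'m"
  assumes "is_basis A B"
  shows "\<exists>!v. A *v v = y \<and> (\<forall>k. k \<notin> B \<longrightarrow> v $ k = 0)"
proof -
  obtain v where v: "A *v v = y \<and> (\<forall>k. k \<notin> B \<longrightarrow> v $ k = 0)"
    using is_basis_solvable[OF assms] by blast
  have "w = v" if "A *v w = y \<and> (\<forall>k. k \<notin> B \<longrightarrow> w $ k = 0)" for w
    using is_basis_kernel_trivial[OF assms, of "w - v"] that v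
    by (simp add: matrix_vector_mult_diff_distrib)
  thus ?thesis using v by blast
qed

lemma basic_sol_spec:
  fixes A :: "real^'n^'m"
  assumes "is_basis A B"
  shows "A *v basic_sol A b B = b \<and> (\<forall>k. k \<notin> B \<longrightarrow> basic_sol A b B $ k = 0)"
  unfolding basic_sol_def by (rule theI'[OF is_basis_unique_solution[OF assms]])

lemma ray_spec:
  fixes A :: "real^'n^'m"
  assumes "is_basis A B" "j \<notin> B"
  shows "A *v ray A B j = 0 \<and> ray A B j $ j = 1
    \<and> (\<forall>k. k \<notin> B \<and> k \<noteq> j \<longrightarrow> ray A B j $ k = 0)"
proof -
  let ?P = "\<lambda>r. A *v r = 0 \<and> r $ j = 1 \<and> (\<forall>k. k \<notin> B \<and> k \<noteq> j \<longrightarrow> r $ k = 0)"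
  obtain v where v: "A *v v = - (A *v axis j 1) \<and> (\<forall>k. k \<notin> B \<longrightarrow> v $ k = 0)"
    using is_basis_solvable[OF assms(1)] by blast
  have r: "?P (v + axis j 1)"
    using v assms(2) by (auto simp: matrix_vector_right_distrib axis_def)
  have "w = v + axis j 1" if w: "?P w" for w
  proof -
    have "(w - (v + axis j 1)) $ k = 0" if "k \<notin> B" for k
      using w r v that by (cases "k = j") auto
    hence "w - (v + axis j 1) = 0"
      using w r by (intro is_basis_kernel_trivial[OF assms(1)])
         (auto simp: matrix_vector_mult_diff_distrib)
    thus ?thesis by simp
  qed
  hence "\<exists>!r. ?P r" using r by blast
  thus ?thesis unfolding ray_def by (rule theI')
qed

lemma PB_eq_basic_sol_plus_rays:
  fixes A :: "real^'n^'m"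
  assumes basis: "is_basis A B" and x: "x \<in> PB A b B"
  shows "x = basic_sol A b B + (\<Sum>j\<in>UNIV - B. x $ j *\<^sub>R ray A B j)"
proof -
  let ?y = "\<Sum>j\<in>UNIV - B. x $ j *\<^sub>R ray A B j"
  have "A *v ?y = (\<Sum>j\<in>UNIV - B. x $ j *\<^sub>R (A *v ray A B j))"
    by (simp add: linear_sum[OF matrix_vector_mul_linear[of A]] matrix_vector_mult_scaleR)
  hence Ay: "A *v ?y = 0" using ray_spec[OF basis] by simp
  have y_nonbasic: "?y $ k = x $ k" if k: "k \<notin> B" for k
  proof -
    have "?y $ k = (\<Sum>j\<in>UNIV - B. x $ j * ray A B j $ k)"
      by simp
    also have "\<dots> = x $ k * ray A B k $ k + (\<Sum>j\<in>UNIV - B - {k}. x $ j * ray A B j $ k)"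
      using k by (subst sum.remove[of _ k]) auto
    also have "(\<Sum>j\<in>UNIV - B - {k}. x $ j * ray A B j $ k) = 0"
      using ray_spec[OF basis] k by (intro sum.neutral) auto
    finally show ?thesis using ray_spec[OF basis k] by simp
  qed
  have "x - basic_sol A b B - ?y = 0"
    using Ay y_nonbasic basic_sol_spec[OF basis] x
    by (intro is_basis_kernel_trivial[OF basis])
       (auto simp: matrix_vector_mult_diff_distrib PB_def)
  thus ?thesis by (simp add: algebra_simps)
qed

lemma add_recc_mem:
  assumes "x \<in> K" "d \<in> recc K"
  shows "x + d \<in> K"
  using assms unfolding recc_def by (force dest: bspec[of _ _ x] spec[of _ 1])

lemma zero_in_recc: "0 \<in> recc K"
  by (simp add: recc_def)

lemma recc_add: "d1 \<in> recc K \<Longrightarrow> d2 \<in> recc K \<Longrightarrow> d1 + d2 \<in> recc K"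
  unfolding recc_def by (simp add: scaleR_add_right add.assoc[symmetric])

lemma recc_scaleR: "d \<in> recc K \<Longrightarrow> 0 \<le> c \<Longrightarrow> c *\<^sub>R d \<in> recc K"
  unfolding recc_def by simp

lemma recc_sum:
  assumes "finite I" "\<And>i. i \<in> I \<Longrightarrow> 0 \<le> c i \<and> v i \<in> recc K"
  shows "(\<Sum>i\<in>I. c i *\<^sub>R v i) \<in> recc K"
  using assms
  by (induction I rule: finite_induct) (simp_all add: zero_in_recc recc_add recc_scaleR)

lemma recc_between:
  assumes "u \<in> recc K" "u + h *\<^sub>R v \<in> recc K" "0 \<le> g" "g \<le> h"
  shows "u + g *\<^sub>R v \<in> recc K"
proof (cases "h = 0")
  case True thus ?thesis using assms by simp
next
  case False
  hence h: "0 < h" using assms by simp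
  have "(g / h) *\<^sub>R (u + h *\<^sub>R v) + (1 - g / h) *\<^sub>R u \<in> recc K"
    using assms h by (intro recc_add[OF recc_scaleR recc_scaleR]) auto
  moreover have "(g / h) *\<^sub>R (u + h *\<^sub>R v) + (1 - g / h) *\<^sub>R u = u + g *\<^sub>R v"
    using h by (simp add: algebra_simps)
  ultimately show ?thesis by simp
qed

definition ray_tails :: "('i \<Rightarrow> 'a::real_vector) \<Rightarrow> ('i \<Rightarrow> ereal) \<Rightarrow> 'i set \<Rightarrow> 'a set" where
  "ray_tails r a D = (\<Union>j\<in>D. {t *\<^sub>R r j | t. ereal t > a j})"

lemma G_eq_ray_tails:
  "G A b B C D = (\<lambda>y. basic_sol A b B + y) ` (convex hull (ray_tails (ray A B) (alpha A b B C) D))"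
  by (simp add: G_def ray_tails_def)

lemma ray_tails_scaleR:
  assumes "\<forall>j\<in>D. 0 \<le> a j" "y \<in> ray_tails r a D" "1 \<le> s"
  shows "s *\<^sub>R y \<in> ray_tails r a D"
proof -
  from assms(2) obtain j t where j: "j \<in> D" "ereal t > a j" "y = t *\<^sub>R r j"
    unfolding ray_tails_def by blast
  have "0 \<le> a j" using assms(1) j(1) by blast
  hence "0 \<le> t" using j(2) by (metis order_le_less_trans ereal_less(2) less_imp_le)
  hence "ereal t \<le> ereal (s * t)" using assms(3) by (simp add: mult_le_cancel_right1)
  hence "ereal (s * t) > a j" using j(2) by (rule order_less_le_trans[rotated])
  thus ?thesis using j unfolding ray_tails_def by auto
qed

lemma convex_hull_ray_tails_add_ray:
  assumes a: "\<forall>j\<in>D. 0 \<le> a j" and i: "i \<in> D" "a i \<noteq> \<infinity>"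
    and y: "y \<in> convex hull (ray_tails r a D)" and t: "0 \<le> t"
  shows "y + t *\<^sub>R r i \<in> convex hull (ray_tails r a D)"
proof (cases "t = 0")
  case True thus ?thesis using y by simp
next
  case False
  let ?H = "convex hull (ray_tails r a D)"
  obtain al where al: "a i = ereal al" using i a by (cases "a i") auto
  define e where "e = t / (\<bar>al\<bar> + t + 1)"
  have e: "0 < e" "e < 1" using t False by (auto simp: e_def field_simps)
  have "(1 / (1 - e)) *\<^sub>R y \<in> (\<lambda>x. (1 / (1 - e)) *\<^sub>R x) ` ?H" using y by blast
  also have "\<dots> = convex hull ((\<lambda>x. (1 / (1 - e)) *\<^sub>R x) ` ray_tails r a D)"
    by (simp add: convex_hull_scaling)
  also have "\<dots> \<subseteq> ?H"
    using ray_tails_scaleR[OF a, of _ r "1 / (1 - e)"] e by (intro hull_mono) auto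
  finally have y': "(1 / (1 - e)) *\<^sub>R y \<in> ?H" .
  have "ereal (t / e) > a i" using al t False by (simp add: e_def)
  hence "(t / e) *\<^sub>R r i \<in> ?H" using i unfolding ray_tails_def by (blast intro: hull_inc)
  hence "(1 - e) *\<^sub>R ((1 / (1 - e)) *\<^sub>R y) + e *\<^sub>R ((t / e) *\<^sub>R r i) \<in> ?H"
    using e by (intro convexD[OF convex_convex_hull y']) auto
  moreover have "(1 - e) *\<^sub>R ((1 / (1 - e)) *\<^sub>R y) + e *\<^sub>R ((t / e) *\<^sub>R r i) = y + t *\<^sub>R r i"
    using e by simp
  ultimately show ?thesis by simp
qed

lemma convex_hull_ray_tails_sum:
  assumes S: "finite S" "S \<subseteq> D"
    and al: "\<And>j. j \<in> S \<Longrightarrow> a j = ereal (al j) \<and> 0 < al j"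
    and c: "\<And>j. j \<in> S \<Longrightarrow> 0 \<le> c j" and c_sum: "1 < sum c S"
  shows "(\<Sum>j\<in>S. (c j * al j) *\<^sub>R r j) \<in> convex hull (ray_tails r a D)"
proof -
  let ?s = "sum c S"
  have "(\<Sum>j\<in>S. (c j / ?s) *\<^sub>R ((?s * al j) *\<^sub>R r j)) \<in> convex hull (ray_tails r a D)"
  proof (rule convex_sum[OF S(1) convex_convex_hull])
    show "(\<Sum>j\<in>S. c j / ?s) = 1" using c_sum by (simp add: sum_divide_distrib[symmetric])
    show "\<And>j. j \<in> S \<Longrightarrow> 0 \<le> c j / ?s" using c c_sum by simp
    fix j assume j: "j \<in> S"
    have "ereal (?s * al j) > a j" using al[OF j] c_sum by simp
    thus "(?s * al j) *\<^sub>R r j \<in> convex hull (ray_tails r a D)"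
      using j S(2) unfolding ray_tails_def by (blast intro: hull_inc)
  qed
  moreover have "(\<Sum>j\<in>S. (c j / ?s) *\<^sub>R ((?s * al j) *\<^sub>R r j)) = (\<Sum>j\<in>S. (c j * al j) *\<^sub>R r j)"
    using c_sum by (intro sum.cong) auto
  ultimately show ?thesis by simp
qed

lemma alpha_nonneg: "0 \<le> alpha A b B C j"
  unfolding alpha_def by (rule Inf_greatest) auto

lemma G_subset_GC: "G A b B C D \<subseteq> GC A b B C D"
  unfolding GC_def using zero_in_recc by force

lemma ray_in_recc_GC:
  assumes "i \<in> D" "alpha A b B C i \<noteq> \<infinity>"
  shows "ray A B i \<in> recc (GC A b B C D)"
  unfolding recc_def
proof (clarify)
  fix z and t :: real assume z: "z \<in> GC A b B C D" and t: "0 \<le> t"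
  let ?T = "ray_tails (ray A B) (alpha A b B C) D"
  from z obtain y d where y: "y \<in> convex hull ?T" and d: "d \<in> recc C"
    and z_eq: "z = (basic_sol A b B + y) + d"
    unfolding GC_def G_eq_ray_tails by blast
  have "y + t *\<^sub>R ray A B i \<in> convex hull ?T"
    using convex_hull_ray_tails_add_ray[OF _ assms y t] alpha_nonneg by blast
  hence "basic_sol A b B + (y + t *\<^sub>R ray A B i) \<in> G A b B C D"
    unfolding G_eq_ray_tails by (rule imageI)
  hence "(basic_sol A b B + (y + t *\<^sub>R ray A B i)) + d \<in> GC A b B C D"
    unfolding GC_def using d by blast
  thus "z + t *\<^sub>R ray A B i \<in> GC A b B C D" using z_eq by (simp add: algebra_simps)
qed

lemma gamma_direction_in_recc_GC:
  assumes i: "i \<in> D" "alpha A b B C i \<noteq> \<infinity>"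
    and g: "0 \<le> g" "ereal g < gamma A b B C D i j"
  shows "real_of_ereal (alpha A b B C i) *\<^sub>R ray A B i + g *\<^sub>R ray A B j \<in> recc (GC A b B C D)"
proof -
  let ?u = "real_of_ereal (alpha A b B C i) *\<^sub>R ray A B i"
  from g(2) obtain h where h: "g < h" "?u + h *\<^sub>R ray A B j \<in> recc (GC A b B C D)"
    unfolding gamma_def less_Sup_iff by auto
  have "?u \<in> recc (GC A b B C D)"
    using recc_scaleR[OF ray_in_recc_GC[OF i]] alpha_nonneg real_of_ereal_pos by blast
  thus ?thesis using recc_between[OF _ h(2) g(1)] h(1) by simp
qed

lemma eps_direction_in_recc_GC:
  assumes "i \<in> S" "S \<subseteq> D" "alpha A b B C i \<noteq> \<infinity>"
    and "0 \<le> g" "ereal g < eps A b B C D S j"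
  shows "real_of_ereal (alpha A b B C i) *\<^sub>R ray A B i + g *\<^sub>R ray A B j \<in> recc (GC A b B C D)"
proof (rule gamma_direction_in_recc_GC)
  have "eps A b B C D S j \<le> gamma A b B C D i j" using assms(1) by (auto simp: eps_def)
  with assms(5) show "ereal g < gamma A b B C D i j" by (rule order_less_le_trans)
qed (use assms in auto)

lemma cut_direction_sum_in_recc_GC:
  fixes A :: "real^'n^'m" and B D :: "'n set"
  defines "N' \<equiv> UNIV - B - D"
  assumes S: "S \<subseteq> D" and D: "D \<inter> B = {}" "\<And>j. j \<in> D \<Longrightarrow> alpha A b B C j \<noteq> \<infinity>"
    and y: "\<And>j. j \<notin> B \<Longrightarrow> 0 \<le> y j" and \<mu>: "\<And>i. i \<in> S \<Longrightarrow> 0 \<le> \<mu> i"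
    and g: "\<And>j. j \<in> N' \<Longrightarrow> 0 < g j \<and> ereal (g j) < eps A b B C D S j"
  shows "(\<Sum>i\<in>S. \<mu> i *\<^sub>R (\<Sum>j\<in>N'. (y j / g j) *\<^sub>R
             (real_of_ereal (alpha A b B C i) *\<^sub>R ray A B i + g j *\<^sub>R ray A B j)))
         + (\<Sum>j\<in>D - S. y j *\<^sub>R ray A B j) \<in> recc (GC A b B C D)"
proof (rule recc_add)
  have "(\<Sum>j\<in>N'. (y j / g j) *\<^sub>R (real_of_ereal (alpha A b B C i) *\<^sub>R ray A B i + g j *\<^sub>R ray A B j))
          \<in> recc (GC A b B C D)" if i: "i \<in> S" for i
  proof (rule recc_sum)
    fix j assume j: "j \<in> N'"
    have "0 \<le> y j" "0 < g j" "ereal (g j) < eps A b B C D S j"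
      using y g[OF j] j by (auto simp: N'_def)
    moreover have "alpha A b B C i \<noteq> \<infinity>" using D(2) S i by auto
    ultimately show "0 \<le> y j / g j \<and> real_of_ereal (alpha A b B C i) *\<^sub>R ray A B i + g j *\<^sub>R ray A B j
                       \<in> recc (GC A b B C D)"
      by (auto intro!: eps_direction_in_recc_GC[OF i S])
  qed simp
  thus "(\<Sum>i\<in>S. \<mu> i *\<^sub>R (\<Sum>j\<in>N'. (y j / g j) *\<^sub>R
          (real_of_ereal (alpha A b B C i) *\<^sub>R ray A B i + g j *\<^sub>R ray A B j))) \<in> recc (GC A b B C D)"
    using \<mu> by (intro recc_sum) auto
  show "(\<Sum>j\<in>D - S. y j *\<^sub>R ray A B j) \<in> recc (GC A b B C D)"
  proof (rule recc_sum)
    fix j assume j: "j \<in> D - S"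
    hence "j \<notin> B" "alpha A b B C j \<noteq> \<infinity>" using D by auto
    thus "0 \<le> y j \<and> ray A B j \<in> recc (GC A b B C D)"
      using y ray_in_recc_GC[of j D] j by simp
  qed simp
qed

lemma tail_combination_in_GC:
  assumes S: "S \<subseteq> D" and al: "\<And>i. i \<in> S \<Longrightarrow> 0 < alpha A b B C i \<and> alpha A b B C i < \<infinity>"
    and c: "\<And>i. i \<in> S \<Longrightarrow> 0 \<le> c i" "1 < sum c S"
  shows "basic_sol A b B + (\<Sum>i\<in>S. (c i * real_of_ereal (alpha A b B C i)) *\<^sub>R ray A B i)
           \<in> GC A b B C D"
proof -
  have "alpha A b B C i = ereal (real_of_ereal (alpha A b B C i)) \<and> 0 < real_of_ereal (alpha A b B C i)"
    if "i \<in> S" for i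
    using al[OF that] by (cases "alpha A b B C i") auto
  hence "(\<Sum>i\<in>S. (c i * real_of_ereal (alpha A b B C i)) *\<^sub>R ray A B i)
           \<in> convex hull (ray_tails (ray A B) (alpha A b B C) D)"
    using c S finite_subset by (intro convex_hull_ray_tails_sum) auto
  thus ?thesis using G_subset_GC unfolding G_eq_ray_tails by blast
qed

lemma ediv_approx:
  assumes ep: "0 < ep" and y: "0 \<le> y" and \<delta>: "0 < \<delta>"
  shows "\<exists>g. 0 < g \<and> ereal g < ep \<and> y / g \<le> ediv y ep + \<delta>"
proof (cases ep)
  case PInf
  define g where "g = (y + 1) / \<delta>"
  have "y / g = \<delta> * (y / (y + 1))" using y \<delta> by (simp add: g_def field_simps)
  also have "\<dots> \<le> \<delta>" using y \<delta> by (intro mult_left_le) auto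
  finally show ?thesis using PInf y \<delta> by (intro exI[of _ g]) (auto simp: g_def ediv_def)
next
  case MInf thus ?thesis using ep by simp
next
  case (real e)
  have e: "0 < e" using ep real by simp
  define g where "g = e * (y + 1) / (y + 1 + \<delta> * e)"
  have den: "0 < y + 1 + \<delta> * e" using y \<delta> e by (simp add: add_pos_nonneg)
  have "0 < g" unfolding g_def using e y den by simp
  moreover have "g < e" unfolding g_def using e \<delta> den by (simp add: divide_less_eq)
  moreover have "y / g = y / e + \<delta> * (y / (y + 1))" using e y den by (simp add: g_def field_simps)
  moreover have "\<delta> * (y / (y + 1)) \<le> \<delta>" using y \<delta> by (intro mult_left_le) auto
  ultimately show ?thesis using real by (intro exI[of _ g]) (auto simp: ediv_def)
qed

lemma ediv_sum_approx:
  fixes y :: "'j \<Rightarrow> real" and ep :: "'j \<Rightarrow> ereal"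
  assumes J: "finite J" and pos: "\<And>j. j \<in> J \<Longrightarrow> 0 < ep j \<and> 0 \<le> y j" and \<Delta>: "0 < \<Delta>"
  shows "\<exists>g. (\<forall>j\<in>J. 0 < g j \<and> ereal (g j) < ep j)
           \<and> (\<Sum>j\<in>J. y j / g j) < (\<Sum>j\<in>J. ediv (y j) (ep j)) + \<Delta>"
proof -
  define \<delta> where "\<delta> = \<Delta> / (real (card J) + 1)"
  have \<delta>: "0 < \<delta>" using \<Delta> by (simp add: \<delta>_def)
  have "\<forall>j\<in>J. \<exists>g. 0 < g \<and> ereal g < ep j \<and> y j / g \<le> ediv (y j) (ep j) + \<delta>"
    using ediv_approx[OF _ _ \<delta>] pos by blast
  then obtain g where g: "\<And>j. j \<in> J \<Longrightarrow> 0 < g j \<and> ereal (g j) < ep j \<and> y j / g j \<le> ediv (y j) (ep j) + \<delta>"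
    by metis
  have "(\<Sum>j\<in>J. y j / g j) \<le> (\<Sum>j\<in>J. ediv (y j) (ep j) + \<delta>)"
    using g by (intro sum_mono) auto
  also have "\<dots> = (\<Sum>j\<in>J. ediv (y j) (ep j)) + real (card J) * \<delta>"
    by (simp add: sum.distrib)
  also have "real (card J) * \<delta> < \<Delta>" using \<Delta> by (simp add: \<delta>_def field_simps)
  finally show ?thesis using g by (intro exI[of _ g]) auto
qed

lemma sum_weighted_pair_directions:
  fixes u :: "'i \<Rightarrow> 'a::real_vector" and v :: "'j \<Rightarrow> 'a"
  assumes "sum w S = \<sigma>" "\<sigma> \<noteq> 0" "\<forall>j\<in>J. g j \<noteq> 0"
  shows "(\<Sum>i\<in>S. (w i / \<sigma>) *\<^sub>R (\<Sum>j\<in>J. (y j / g j) *\<^sub>R (u i + g j *\<^sub>R v j)))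
       = (\<Sum>i\<in>S. (w i / \<sigma> * (\<Sum>j\<in>J. y j / g j)) *\<^sub>R u i) + (\<Sum>j\<in>J. y j *\<^sub>R v j)"
proof -
  let ?T = "\<Sum>j\<in>J. y j / g j" and ?V = "\<Sum>j\<in>J. y j *\<^sub>R v j"
  have gV: "(\<Sum>j\<in>J. (y j / g j * g j) *\<^sub>R v j) = ?V"
    using assms(3) by (intro sum.cong) auto
  have inner: "(\<Sum>j\<in>J. (y j / g j) *\<^sub>R (u i + g j *\<^sub>R v j)) = ?T *\<^sub>R u i + ?V" for i
    by (simp add: scaleR_add_right sum.distrib scaleR_sum_left gV[symmetric])
  have "(\<Sum>i\<in>S. (w i / \<sigma>) *\<^sub>R (?T *\<^sub>R u i + ?V))
      = (\<Sum>i\<in>S. (w i / \<sigma> * ?T) *\<^sub>R u i) + (\<Sum>i\<in>S. w i / \<sigma>) *\<^sub>R ?V"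
    by (simp only: scaleR_add_right sum.distrib scaleR_scaleR scaleR_sum_left[symmetric])
  moreover have "(\<Sum>i\<in>S. w i / \<sigma>) = 1" using assms(1,2) by (simp add: sum_divide_distrib[symmetric])
  ultimately show ?thesis unfolding inner by (simp only: scaleR_one)
qed

lemma ray_sum_decomposition:
  fixes r :: "'i \<Rightarrow> 'a::real_vector" and w x a g :: "'i \<Rightarrow> real" and U D :: "'i set"
  assumes U: "finite U" "S \<subseteq> D" "D \<subseteq> U"
    and w: "\<forall>i\<in>S. w i * a i = x i" and \<sigma>: "sum w S \<noteq> 0" and g: "\<forall>j\<in>U - D. g j \<noteq> 0"
  shows "(\<Sum>j\<in>U. x j *\<^sub>R r j)
       = (\<Sum>i\<in>S. ((1 - (\<Sum>j\<in>U - D. x j / g j) / sum w S) * w i * a i) *\<^sub>R r i)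
         + ((\<Sum>i\<in>S. (w i / sum w S) *\<^sub>R (\<Sum>j\<in>U - D. (x j / g j) *\<^sub>R (a i *\<^sub>R r i + g j *\<^sub>R r j)))
            + (\<Sum>j\<in>D - S. x j *\<^sub>R r j))"
proof -
  let ?\<sigma> = "sum w S" and ?T = "\<Sum>j\<in>U - D. x j / g j" and ?rj = "\<lambda>J. \<Sum>j\<in>J. x j *\<^sub>R r j"
  have "(1 - ?T / ?\<sigma>) * w i * a i + w i / ?\<sigma> * ?T * a i = w i * a i" for i
    using \<sigma> by (simp add: field_simps)
  hence S_eq: "(\<Sum>i\<in>S. ((1 - ?T / ?\<sigma>) * w i * a i) *\<^sub>R r i)
               + (\<Sum>i\<in>S. (w i / ?\<sigma> * ?T) *\<^sub>R a i *\<^sub>R r i) = ?rj S"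
    using w by (simp add: sum.distrib[symmetric] scaleR_add_left[symmetric])
  have "?rj U = ?rj ((S \<union> (D - S)) \<union> (U - D))" using U by (intro arg_cong[where f = ?rj]) auto
  also have "\<dots> = ?rj (S \<union> (D - S)) + ?rj (U - D)"
    using U by (intro sum.union_disjoint) (auto intro: finite_subset)
  also have "?rj (S \<union> (D - S)) = ?rj S + ?rj (D - S)"
    using U by (intro sum.union_disjoint) (auto intro: finite_subset)
  finally have split_eq: "?rj U = ?rj S + ?rj (D - S) + ?rj (U - D)" .
  show ?thesis
    unfolding sum_weighted_pair_directions[OF refl \<sigma> g] split_eq S_eq[symmetric]
    by (simp add: add_ac)
qed

lemma PB_mem_GC_if_cut_violated:
  fixes A :: "real^'n^'m" and B D :: "'n set"
  defines "N' \<equiv> UNIV - B - D"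
  assumes basis: "is_basis A B" and x: "x \<in> PB A b B"
    and D: "D \<inter> B = {}" "\<And>j. j \<in> D \<Longrightarrow> 0 < alpha A b B C j \<and> alpha A b B C j < \<infinity>"
    and S: "S \<subseteq> D"
    and g: "\<And>j. j \<in> N' \<Longrightarrow> 0 < g j \<and> ereal (g j) < eps A b B C D S j"
    and gt: "(\<Sum>i\<in>S. x $ i / real_of_ereal (alpha A b B C i)) - (\<Sum>j\<in>N'. x $ j / g j) > 1"
  shows "x \<in> GC A b B C D"
proof -
  let ?al = "\<lambda>j. real_of_ereal (alpha A b B C j)" and ?r = "ray A B"
  define w where "w = (\<lambda>i. x $ i / ?al i)"
  define \<sigma> where "\<sigma> = sum w S"
  define T where "T = (\<Sum>j\<in>N'. x $ j / g j)"
  have x_nonneg: "0 \<le> x $ j" if "j \<notin> B" for j using x that by (auto simp: PB_def)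
  have w: "w i * ?al i = x $ i \<and> 0 \<le> w i" if "i \<in> S" for i
  proof -
    have "0 < ?al i" using D(2)[of i] S that by (cases "alpha A b B C i") auto
    moreover have "i \<notin> B" using D(1) S that by auto
    ultimately show ?thesis using x_nonneg by (simp add: w_def)
  qed
  have "0 \<le> T" unfolding T_def
  proof (rule sum_nonneg)
    fix j assume j: "j \<in> N'"
    hence "0 \<le> x $ j" "0 < g j" using x_nonneg g by (auto simp: N'_def)
    thus "0 \<le> x $ j / g j" by simp
  qed
  hence T_lt: "T < \<sigma> - 1" and \<sigma>: "0 < \<sigma>" using gt by (simp_all add: \<sigma>_def w_def T_def)
  have "(\<Sum>i\<in>S. (1 - T / \<sigma>) * w i) = (1 - T / \<sigma>) * \<sigma>"
    by (simp only: \<sigma>_def sum_distrib_left)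
  also have "\<dots> = \<sigma> - T" using \<sigma> by (simp add: left_diff_distrib)
  finally have p: "basic_sol A b B + (\<Sum>i\<in>S. ((1 - T / \<sigma>) * w i * ?al i) *\<^sub>R ?r i) \<in> GC A b B C D"
    using D(2) S w T_lt \<sigma> by (intro tail_combination_in_GC) auto
  define d where "d = (\<Sum>i\<in>S. (w i / \<sigma>) *\<^sub>R (\<Sum>j\<in>N'. (x $ j / g j) *\<^sub>R (?al i *\<^sub>R ?r i + g j *\<^sub>R ?r j)))
                      + (\<Sum>j\<in>D - S. x $ j *\<^sub>R ?r j)"
  have d_recc: "d \<in> recc (GC A b B C D)"
    unfolding d_def N'_def
    using D w \<sigma> g x_nonneg S by (intro cut_direction_sum_in_recc_GC) (auto simp: N'_def)
  have "(\<Sum>j\<in>UNIV - B. x $ j *\<^sub>R ?r j) = (\<Sum>i\<in>S. ((1 - T / \<sigma>) * w i * ?al i) *\<^sub>R ?r i) + d"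
    unfolding d_def T_def \<sigma>_def N'_def
  proof (rule ray_sum_decomposition)
    show "\<forall>i\<in>S. w i * ?al i = x $ i" using w by simp
    show "sum w S \<noteq> 0" using \<sigma> by (simp add: \<sigma>_def)
    show "\<forall>j\<in>UNIV - B - D. g j \<noteq> 0" using g by (force simp: N'_def)
  qed (use S D(1) in auto)
  hence "x = (basic_sol A b B + (\<Sum>i\<in>S. ((1 - T / \<sigma>) * w i * ?al i) *\<^sub>R ?r i)) + d"
    using PB_eq_basic_sol_plus_rays[OF basis x] by (simp add: add.assoc)
  thus ?thesis using add_recc_mem[OF p d_recc] by simp
qed

theorem theorem3:
  fixes A :: "real^'n^'m" and b :: "real^'m" and B :: "'n set"
    and C :: "(real^'n) set" and D S :: "'n set" and x :: "real^'n"
  assumes full_rank: "rank A = CARD('m)"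
    and basis: "is_basis A B"
    and feasible: "\<forall>i. 0 \<le> basic_sol A b B $ i"
    and C_open: "open C" and C_convex: "convex C"
    and xbar_notin: "basic_sol A b B \<notin> closure C"
    and recc_sub: "recc C \<subseteq> recc (PB A b B)"
    and D_sub: "D \<subseteq> N1 A b B C \<union> N2 A b B C"
    and S_sub: "S \<subseteq> M A b B C D"
    and x_in: "x \<in> PB A b B - GC A b B C D"
  shows "(\<Sum>j\<in>S. x $ j / real_of_ereal (alpha A b B C j))
         - (\<Sum>j\<in>UNIV - B - D. ediv (x $ j) (eps A b B C D S j)) \<le> 1"
proof (rule ccontr)
  let ?N' = "UNIV - B - D" and ?eps = "eps A b B C D S"
  let ?\<sigma> = "\<Sum>j\<in>S. x $ j / real_of_ereal (alpha A b B C j)"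
  let ?\<tau> = "\<Sum>j\<in>?N'. ediv (x $ j) (?eps j)"
  assume "\<not> ?\<sigma> - ?\<tau> \<le> 1"
  hence gap: "0 < ?\<sigma> - ?\<tau> - 1" by simp
  hence S_ne: "S \<noteq> {}" by (auto simp: eps_def ediv_def)
  have SD: "S \<subseteq> D" using S_sub by (auto simp: M_def)
  have D: "D \<inter> B = {}" "\<And>j. j \<in> D \<Longrightarrow> 0 < alpha A b B C j \<and> alpha A b B C j < \<infinity>"
    using D_sub by (auto simp: N1_def N2_def)
  have "0 < ?eps j \<and> 0 \<le> x $ j" if "j \<in> ?N'" for j
    using S_sub S_ne that x_in by (auto simp: eps_def Min_gr_iff M_def PB_def)
  then obtain g where g: "\<forall>j\<in>?N'. 0 < g j \<and> ereal (g j) < ?eps j"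
    and T: "(\<Sum>j\<in>?N'. x $ j / g j) < ?\<tau> + (?\<sigma> - ?\<tau> - 1)"
    using ediv_sum_approx[OF _ _ gap, of ?N' ?eps "\<lambda>j. x $ j"] by auto
  have "x \<in> GC A b B C D"
  proof (rule PB_mem_GC_if_cut_violated[OF basis _ D SD])
    show "x \<in> PB A b B" using x_in by simp
    show "0 < g j \<and> ereal (g j) < ?eps j" if "j \<in> ?N'" for j using g that by blast
    show "1 < ?\<sigma> - (\<Sum>j\<in>?N'. x $ j / g j)" using T by simp
  qed
  thus False using x_in by simp
qed

end
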